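(* Let $\mathcal{N}$ be a quantum channel and let $\sigma$ be an optimal mixed state for $\mathcal{N}$. Let $\rho$ be a pure state and $\rho(\varepsilon)=\rho+\sum_{i\ge1}\varepsilon^iA^{(i)}$ a perturbative expansion of $\rho$, and let $f(\varepsilon)=I_c(\rho(\varepsilon),\mathcal{N})-I_c(\rho,\mathcal{N})$. Suppose $\varepsilon$ with $|\varepsilon|<r$ is such that $\sigma-r'\cdot\rho(\varepsilon)$ is positive semidefinite for some $r'>0$ and $f(\varepsilon)<0$. Then $P^{(1)}(\mathcal{N})>Q^{(1)}(\mathcal{N})$.
   Context: All Hilbert spaces are finite-dimensional; a quantum channel is a completely positive trace-preserving map. For a Stinespring isometry $V$ with $\mathcal{N}(\omega)=\mathrm{Tr}_E(V\omega V^\dagger)$, the complementary channel is $\mathcal{N}^c(\omega)=\mathrm{Tr}_B(V\omega V^\dagger)$. Coherent information: $I_c(\omega,\mathcal{N})=S(\mathcal{N}(\omega))-S(\mathcal{N}^c(\omega))$, $S$ the von Neumann entropy. One-shot quantum capacity: $Q^{(1)}(\mathcal{N})=\max_\omega I_c(\omega,\mathcal{N})$; $\sigma$ is optimal if $I_c(\sigma,\mathcal{N})=Q^{(1)}(\mathcal{N})$. For a finite ensemble $\{p_i,\rho_i\}$ (probabilities $p_i$, states $\rho_i$) with average $\bar\rho=\sum_ip_i\rho_i$, the private information is $I_p(\{p_i,\rho_i\},\mathcal{N})=I_c(\bar\rho,\mathcal{N})-\sum_ip_iI_c(\rho_i,\mathcal{N})$, and the one-shot private capacity is $P^{(1)}(\mathcal{N})=\max_{\{p_i,\rho_i\}}I_p(\{p_i,\rho_i\},\mathcal{N})$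 over all ensembles. A perturbative expansion of $\rho$ is a series $\rho(\varepsilon)=\rho+\sum_{i\ge1}\varepsilon^iA^{(i)}$ with each $A^{(i)}$ traceless Hermitian, such that for some $r>0$ the series converges and $\rho(\varepsilon)$ is a density operator for all $\varepsilon\in(-r,r)$. *)

theory Defs
  imports "Jordan_Normal_Form.Char_Poly" "Jordan_Normal_Form.Schur_Decomposition"
    "HOL-Computational_Algebra.Fundamental_Theorem_Algebra"
begin

definition mtrace :: "complex mat \<Rightarrow> complex" where
  "mtrace A = (\<Sum>i<dim_row A. A $$ (i,i))"

definition hermitian :: "complex mat \<Rightarrow> bool" where
  "hermitian A \<longleftrightarrow> A = mat_adjoint A"

definition psd :: "nat \<Rightarrow> complex mat \<Rightarrow> bool" where
  "psd n A \<longleftrightarrow> A \<in> carrier_mat n n \<and> hermitian A \<and>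
     (\<forall>v \<in> carrier_vec n. 0 \<le> Re (conjugate v \<bullet> (A *\<^sub>v v)))"

definition density :: "nat \<Rightarrow> complex mat \<Rightarrow> bool" where
  "density n \<rho> \<longleftrightarrow> psd n \<rho> \<and> mtrace \<rho> = 1"

definition pure_state :: "nat \<Rightarrow> complex mat \<Rightarrow> bool" where
  "pure_state n \<rho> \<longleftrightarrow> density n \<rho> \<and> \<rho> * \<rho> = \<rho>"

text \<open>Von Neumann entropy: minus the sum of lambda ln lambda over the eigenvalues
  (roots of the characteristic polynomial, with multiplicity); note ln 0 = 0 in Isabelle,
  matching the convention 0 log 0 = 0.\<close>
definition vn_entropy :: "complex mat \<Rightarrow> real" where
  "vn_entropy \<rho> = - (\<Sum>x\<in>#proots (char_poly \<rho>). Re x * ln (Re x))"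

text \<open>Index of B \<otimes> E: the basis vector b \<otimes> e has index b * dE + e.\<close>

definition isometry :: "nat \<Rightarrow> nat \<Rightarrow> nat \<Rightarrow> complex mat \<Rightarrow> bool" where
  "isometry dA dB dE V \<longleftrightarrow> V \<in> carrier_mat (dB * dE) dA \<and> mat_adjoint V * V = 1\<^sub>m dA"

definition ptrace_E :: "nat \<Rightarrow> nat \<Rightarrow> complex mat \<Rightarrow> complex mat" where
  "ptrace_E dB dE X = mat dB dB (\<lambda>(b, b'). \<Sum>e<dE. X $$ (b * dE + e, b' * dE + e))"

definition ptrace_B :: "nat \<Rightarrow> nat \<Rightarrow> complex mat \<Rightarrow> complex mat" where
  "ptrace_B dB dE X = mat dE dE (\<lambda>(e, e'). \<Sum>b<dB. X $$ (b * dE + e, b * dE + e'))"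

definition channel :: "nat \<Rightarrow> nat \<Rightarrow> complex mat \<Rightarrow> complex mat \<Rightarrow> complex mat" where
  "channel dB dE V \<omega> = ptrace_E dB dE (V * \<omega> * mat_adjoint V)"

definition compl_channel :: "nat \<Rightarrow> nat \<Rightarrow> complex mat \<Rightarrow> complex mat \<Rightarrow> complex mat" where
  "compl_channel dB dE V \<omega> = ptrace_B dB dE (V * \<omega> * mat_adjoint V)"

definition coh_info :: "nat \<Rightarrow> nat \<Rightarrow> complex mat \<Rightarrow> complex mat \<Rightarrow> real" where
  "coh_info dB dE V \<omega> = vn_entropy (channel dB dE V \<omega>) - vn_entropy (compl_channel dB dE V \<omega>)"

definition Q1 :: "nat \<Rightarrow> nat \<Rightarrow> nat \<Rightarrow> complex mat \<Rightarrow> real" where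
  "Q1 dA dB dE V = Sup {coh_info dB dE V \<omega> | \<omega>. density dA \<omega>}"

definition ensemble :: "nat \<Rightarrow> nat \<Rightarrow> (nat \<Rightarrow> real) \<Rightarrow> (nat \<Rightarrow> complex mat) \<Rightarrow> bool" where
  "ensemble dA n p rs \<longleftrightarrow> (\<forall>i<n. 0 \<le> p i \<and> density dA (rs i)) \<and> (\<Sum>i<n. p i) = 1"

definition ens_avg :: "nat \<Rightarrow> nat \<Rightarrow> (nat \<Rightarrow> real) \<Rightarrow> (nat \<Rightarrow> complex mat) \<Rightarrow> complex mat" where
  "ens_avg dA n p rs = mat dA dA (\<lambda>(j, k). \<Sum>i<n. complex_of_real (p i) * rs i $$ (j, k))"

definition private_info ::
  "nat \<Rightarrow> nat \<Rightarrow> nat \<Rightarrow> complex mat \<Rightarrow> nat \<Rightarrow> (nat \<Rightarrow> real) \<Rightarrow> (nat \<Rightarrow> complex mat) \<Rightarrow> real" where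
  "private_info dA dB dE V n p rs =
     coh_info dB dE V (ens_avg dA n p rs) - (\<Sum>i<n. p i * coh_info dB dE V (rs i))"

definition P1 :: "nat \<Rightarrow> nat \<Rightarrow> nat \<Rightarrow> complex mat \<Rightarrow> real" where
  "P1 dA dB dE V = Sup {private_info dA dB dE V n p rs | n p rs. ensemble dA n p rs}"

definition pert_mat :: "nat \<Rightarrow> complex mat \<Rightarrow> (nat \<Rightarrow> complex mat) \<Rightarrow> real \<Rightarrow> complex mat" where
  "pert_mat n \<rho> A \<epsilon> = mat n n (\<lambda>(j, k).
     \<rho> $$ (j, k) + (\<Sum>i. complex_of_real (\<epsilon> ^ Suc i) * A (Suc i) $$ (j, k)))"

definition pert_expansion :: "nat \<Rightarrow> complex mat \<Rightarrow> (nat \<Rightarrow> complex mat) \<Rightarrow> real \<Rightarrow> bool" where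
  "pert_expansion n \<rho> A r \<longleftrightarrow> r > 0 \<and>
     (\<forall>i\<ge>1. A i \<in> carrier_mat n n \<and> hermitian (A i) \<and> mtrace (A i) = 0) \<and>
     (\<forall>\<epsilon>. \<bar>\<epsilon>\<bar> < r \<longrightarrow>
        (\<forall>j<n. \<forall>k<n. summable (\<lambda>i. complex_of_real (\<epsilon> ^ Suc i) * A (Suc i) $$ (j, k))) \<and>
        density n (pert_mat n \<rho> A \<epsilon>))"

end

theory Submission
  imports Defs
begin

text \<open>A pure input u has zero coherent information: with M the coefficient matrix of V u in the
  product basis of B \<otimes> E, the two outputs are M M* and (M* M)^T, which have the same nonzero
  spectrum. So f(\<epsilon>) < 0 means I_c(\<rho>(\<epsilon>)) < 0. The positive remainder \<sigma> - r' \<rho>(\<epsilon>) is a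
  nonnegative combination of pure states of total weight 1 - r'; together with \<rho>(\<epsilon>) at weight r'
  they form an ensemble with average \<sigma>, whose private information is
  I_c(\<sigma>) - r' I_c(\<rho>(\<epsilon>)) > I_c(\<sigma>) = Q1. Entropies are bounded by the dimensions, so this
  ensemble also bounds the supremum P1 from below.\<close>

lemma dim_mat_adjoint [simp]:
  "dim_row (mat_adjoint A) = dim_col A" "dim_col (mat_adjoint A) = dim_row A"
  unfolding mat_adjoint_def by auto

lemma index_mat_adjoint [simp]:
  "i < dim_col A \<Longrightarrow> j < dim_row A \<Longrightarrow> mat_adjoint A $$ (i,j) = cnj (A $$ (j,i))"
  unfolding mat_adjoint_def by (simp add: mat_of_rows_def)

lemma mat_adjoint_carrier_mat [simp]:
  assumes "A \<in> carrier_mat m n"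
  shows "mat_adjoint A \<in> carrier_mat n m"
proof -
  have "dim_row A = m" "dim_col A = n" using assms by auto
  then show ?thesis by (intro carrier_matI) simp_all
qed

lemma index_mult_mat_sum:
  "A \<in> carrier_mat m k \<Longrightarrow> B \<in> carrier_mat k n \<Longrightarrow> i < m \<Longrightarrow> j < n \<Longrightarrow>
   (A * B) $$ (i,j) = (\<Sum>l<k. A $$ (i,l) * B $$ (l,j))"
  by (simp add: scalar_prod_def lessThan_atLeast0)

lemma index_mult_mat_triple:
  assumes A: "A \<in> carrier_mat m p" and B: "B \<in> carrier_mat p q" and C: "C \<in> carrier_mat q n"
    and i: "i < m" and j: "j < n"
  shows "(A * B * C) $$ (i,j) = (\<Sum>a<p. \<Sum>b<q. A $$ (i,a) * B $$ (a,b) * C $$ (b,j))"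
proof -
  have AB: "A * B \<in> carrier_mat m q" using A B by auto
  have "(A * B * C) $$ (i,j) = (\<Sum>b<q. (\<Sum>a<p. A $$ (i,a) * B $$ (a,b)) * C $$ (b,j))"
    by (simp add: index_mult_mat_sum[OF AB C i j] index_mult_mat_sum[OF A B i])
  also have "\<dots> = (\<Sum>a<p. \<Sum>b<q. A $$ (i,a) * B $$ (a,b) * C $$ (b,j))"
    by (simp add: sum_distrib_right sum.swap[of _ "{..<q}"])
  finally show ?thesis .
qed

lemma index_congruence_mat:
  assumes K: "K \<in> carrier_mat m n" and Y: "Y \<in> carrier_mat n n" and x: "x < m" and y: "y < m"
  shows "(K * Y * mat_adjoint K) $$ (x,y) = (\<Sum>a<n. \<Sum>b<n. K $$ (x,a) * Y $$ (a,b) * cnj (K $$ (y,b)))"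
  using index_mult_mat_triple[OF K Y mat_adjoint_carrier_mat[OF K] x y] K y by simp

lemma sum_mult_delta_right:
  fixes x :: "nat \<Rightarrow> 'a :: semiring_0"
  shows "j < n \<Longrightarrow> (\<Sum>k<n. x k * (if k = j then c else 0)) = x j * c"
  by (simp add: if_distrib cong: if_cong)

lemma sum_mult_delta_left:
  fixes x :: "nat \<Rightarrow> 'a :: semiring_0"
  assumes "j < n"
  shows "(\<Sum>k<n. (if k = j then c else 0) * x k) = c * x j"
proof -
  have "(\<Sum>k<n. (if k = j then c else 0) * x k) = (\<Sum>k<n. if k = j then c * x k else 0)"
    by (rule sum.cong) auto
  then show ?thesis using assms by simp
qed

lemma sum_lessThan_mult_nat: "(\<Sum>x<m * k. h x) = (\<Sum>b<m. \<Sum>e<(k::nat). h (b * k + e))"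
proof -
  have "sum h {b * k..<b * k + k} = (\<Sum>e<k. h (b * k + e))" for b
    using sum.shift_bounds_nat_ivl[of h 0 "b * k" k] by (simp add: add.commute lessThan_atLeast0)
  then show ?thesis by (simp flip: sum.nat_group)
qed

lemma tensor_index_less: "b < (dB::nat) \<Longrightarrow> e < dE \<Longrightarrow> b * dE + e < dB * dE"
proof -
  assume b: "b < dB" and e: "e < dE"
  have "b * dE + e < Suc b * dE" using e by simp
  also have "\<dots> \<le> dB * dE" using b by (intro mult_le_mono1) simp
  finally show ?thesis .
qed

section \<open>Positive semidefinite matrices\<close>

definition hermitian_on :: "nat \<Rightarrow> complex mat \<Rightarrow> bool" where
  "hermitian_on n A \<longleftrightarrow> (\<forall>i<n. \<forall>j<n. A $$ (i,j) = cnj (A $$ (j,i)))"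

lemma hermitian_onD:
  "hermitian_on n A \<Longrightarrow> i < n \<Longrightarrow> j < n \<Longrightarrow> A $$ (i,j) = cnj (A $$ (j,i))"
  unfolding hermitian_on_def by blast

lemma hermitian_onD_cnj:
  "hermitian_on n A \<Longrightarrow> i < n \<Longrightarrow> j < n \<Longrightarrow> cnj (A $$ (i,j)) = A $$ (j,i)"
  using hermitian_onD[of n A j i] by simp

lemma hermitian_iff_hermitian_on:
  assumes A: "A \<in> carrier_mat n n"
  shows "hermitian A \<longleftrightarrow> hermitian_on n A"
proof -
  have "mat_adjoint A $$ (i,j) = cnj (A $$ (j,i))" if "i < n" "j < n" for i j
    using A that by simp
  moreover have "mat_adjoint A \<in> carrier_mat n n" using A by simp
  ultimately show ?thesis
    unfolding hermitian_def hermitian_on_def using A by (auto simp: mat_eq_iff)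
qed

definition quad_form :: "nat \<Rightarrow> complex mat \<Rightarrow> (nat \<Rightarrow> complex) \<Rightarrow> complex" where
  "quad_form n A f = (\<Sum>i<n. \<Sum>k<n. cnj (f i) * A $$ (i,k) * f k)"

lemma quad_form_vec:
  assumes "A \<in> carrier_mat n n" "v \<in> carrier_vec n"
  shows "conjugate v \<bullet> (A *\<^sub>v v) = quad_form n A (\<lambda>i. v $ i)"
  using assms unfolding quad_form_def
  by (auto simp: scalar_prod_def sum_distrib_left mult.assoc lessThan_atLeast0 intro!: sum.cong)

lemma psd_iff_quad_form:
  "psd n A \<longleftrightarrow> A \<in> carrier_mat n n \<and> hermitian_on n A \<and> (\<forall>f. 0 \<le> Re (quad_form n A f))"
proof
  assume A: "psd n A"
  have "0 \<le> Re (quad_form n A f)" for f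
  proof -
    have "quad_form n A f = conjugate (vec n f) \<bullet> (A *\<^sub>v vec n f)"
      using A quad_form_vec[of A n "vec n f"] unfolding psd_def quad_form_def by simp
    then show ?thesis using A unfolding psd_def by simp
  qed
  with A show "A \<in> carrier_mat n n \<and> hermitian_on n A \<and> (\<forall>f. 0 \<le> Re (quad_form n A f))"
    unfolding psd_def using hermitian_iff_hermitian_on by auto
qed (auto simp: psd_def hermitian_iff_hermitian_on quad_form_vec)

lemma psdD:
  assumes "psd n A"
  shows "A \<in> carrier_mat n n" "hermitian_on n A" "0 \<le> Re (quad_form n A f)"
  using assms unfolding psd_iff_quad_form by auto

lemma psdI:
  "A \<in> carrier_mat n n \<Longrightarrow> hermitian_on n A \<Longrightarrow> (\<And>f. 0 \<le> Re (quad_form n A f)) \<Longrightarrow> psd n A"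
  unfolding psd_iff_quad_form by auto

lemma density_iff_diag_sum: "density n A \<longleftrightarrow> psd n A \<and> (\<Sum>i<n. A $$ (i,i)) = 1"
  unfolding density_def mtrace_def using psdD(1) by fastforce

lemma densityD:
  assumes "density n A"
  shows "psd n A" "A \<in> carrier_mat n n" "(\<Sum>i<n. A $$ (i,i)) = 1"
  using assms psdD(1) unfolding density_iff_diag_sum by auto

lemma quad_form_add_unit:
  assumes j: "j < n"
  shows "quad_form n A (\<lambda>i. v i + (if i = j then c else 0)) = quad_form n A v
     + c * (\<Sum>i<n. cnj (v i) * A $$ (i,j)) + cnj c * (\<Sum>k<n. A $$ (j,k) * v k) + cnj c * c * A $$ (j,j)"
proof -
  let ?d = "\<lambda>i. if i = j then c else (0::complex)"
  let ?e = "\<lambda>i. if i = j then cnj c else (0::complex)"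
  have "quad_form n A (\<lambda>i. v i + ?d i) = (\<Sum>i<n. \<Sum>k<n. cnj (v i) * A $$ (i,k) * v k
      + (cnj (v i) * A $$ (i,k)) * ?d k + ?e i * (A $$ (i,k) * v k) + ?e i * (A $$ (i,k) * ?d k))"
    unfolding quad_form_def by (intro sum.cong refl) (simp add: algebra_simps)
  also have "\<dots> = quad_form n A v + (\<Sum>i<n. \<Sum>k<n. (cnj (v i) * A $$ (i,k)) * ?d k)
     + (\<Sum>i<n. ?e i * (\<Sum>k<n. A $$ (i,k) * v k)) + (\<Sum>i<n. ?e i * (\<Sum>k<n. A $$ (i,k) * ?d k))"
    unfolding quad_form_def by (simp add: sum.distrib sum_distrib_left)
  also have "(\<Sum>i<n. \<Sum>k<n. (cnj (v i) * A $$ (i,k)) * ?d k) = (\<Sum>i<n. cnj (v i) * A $$ (i,j) * c)"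
    using j by (intro sum.cong refl) (rule sum_mult_delta_right)
  also have "(\<Sum>i<n. ?e i * (\<Sum>k<n. A $$ (i,k) * v k)) = cnj c * (\<Sum>k<n. A $$ (j,k) * v k)"
    by (rule sum_mult_delta_left[OF j])
  also have "(\<Sum>i<n. ?e i * (\<Sum>k<n. A $$ (i,k) * ?d k)) = cnj c * (A $$ (j,j) * c)"
    by (simp add: sum_mult_delta_left[OF j] sum_mult_delta_right[OF j])
  finally show ?thesis by (simp add: sum_distrib_left sum_distrib_right algebra_simps)
qed

lemma quad_form_unit: "j < n \<Longrightarrow> quad_form n A (\<lambda>i. if i = j then 1 else 0) = A $$ (j,j)"
  using quad_form_add_unit[of j n A "\<lambda>i. 0" 1] by (simp add: quad_form_def)

lemma psd_diag_real: "psd n A \<Longrightarrow> j < n \<Longrightarrow> A $$ (j,j) = complex_of_real (Re (A $$ (j,j)))"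
  using hermitian_onD[OF psdD(2), of n A j j] by (simp add: complex_eq_iff)

lemma psd_diag_nonneg: "psd n A \<Longrightarrow> j < n \<Longrightarrow> 0 \<le> Re (A $$ (j,j))"
  using psdD(3)[of n A "\<lambda>i. if i = j then 1 else 0"] by (simp add: quad_form_unit)

text \<open>If A_kk = 0 but a = A_jk \<noteq> 0, the quadratic form at e_j - t conj(a) e_k equals
  A_jj - 2 t |a|^2, which is negative for large t.\<close>
lemma psd_diag_zero_imp_col_zero:
  assumes A: "psd n A" and k: "k < n" and j: "j < n" and z: "A $$ (k,k) = 0"
  shows "A $$ (j,k) = 0"
proof (rule ccontr)
  assume nz: "A $$ (j,k) \<noteq> 0"
  let ?a = "A $$ (j,k)"
  define t where "t = (Re (A $$ (j,j)) + 1) / (2 * (cmod ?a)^2)"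
  have t: "t * (2 * (cmod ?a)^2) = Re (A $$ (j,j)) + 1" using nz unfolding t_def by simp
  define c where "c = - complex_of_real t * cnj ?a"
  let ?v = "\<lambda>i. if i = j then 1 else (0::complex)"
  have s1: "(\<Sum>i<n. cnj (?v i) * A $$ (i,k)) = ?a"
    using sum_mult_delta_left[OF j, of 1 "\<lambda>i. A $$ (i,k)"] by (simp add: if_distrib cong: if_cong)
  have s2: "(\<Sum>l<n. A $$ (k,l) * ?v l) = cnj ?a"
    using sum_mult_delta_right[OF j, of "\<lambda>l. A $$ (k,l)" 1] hermitian_onD[OF psdD(2)[OF A] k j]
    by simp
  have "quad_form n A (\<lambda>i. ?v i + (if i = k then c else 0)) = A $$ (j,j) + c * ?a + cnj c * cnj ?a"
    using quad_form_add_unit[OF k, of A ?v c] quad_form_unit[OF j, of A] s1 s2 z by simp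
  also have "c * ?a = - complex_of_real (t * (cmod ?a)^2)"
    unfolding c_def using complex_norm_square[of ?a] by (simp add: algebra_simps)
  also have "cnj c * cnj ?a = - complex_of_real (t * (cmod ?a)^2)"
    unfolding c_def using complex_norm_square[of ?a] by (simp add: algebra_simps)
  finally have "Re (quad_form n A (\<lambda>i. ?v i + (if i = k then c else 0)))
      = Re (A $$ (j,j)) - t * (2 * (cmod ?a)^2)"
    by simp
  then have "Re (quad_form n A (\<lambda>i. ?v i + (if i = k then c else 0))) = -1"
    using t by simp
  then show False using psdD(3)[OF A, of "\<lambda>i. ?v i + (if i = k then c else 0)"] by simp
qed

lemma psd_diag_zero_imp_row_zero:
  "psd n A \<Longrightarrow> k < n \<Longrightarrow> j < n \<Longrightarrow> A $$ (k,k) = 0 \<Longrightarrow> A $$ (k,j) = 0"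
  using psd_diag_zero_imp_col_zero[of n A k j] hermitian_onD[OF psdD(2), of n A k j] by simp

lemma psd_diag_sum_zero:
  assumes A: "psd n A" and t: "(\<Sum>i<n. A $$ (i,i)) = 0"
  shows "A = 0\<^sub>m n n"
proof -
  have "(\<Sum>i<n. Re (A $$ (i,i))) = 0" using arg_cong[OF t, of Re] by (simp add: Re_sum)
  then have "Re (A $$ (i,i)) = 0" if "i < n" for i
    using that psd_diag_nonneg[OF A] sum_nonneg_eq_0_iff[of "{..<n}" "\<lambda>i. Re (A $$ (i,i))"] by auto
  then have "A $$ (i,i) = 0" if "i < n" for i using that psd_diag_real[OF A] by (metis of_real_0)
  then show ?thesis
    by (intro eq_matI) (use psdD(1)[OF A] psd_diag_zero_imp_row_zero[OF A] in auto)
qed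

lemma hermitian_on_congruence:
  assumes K: "K \<in> carrier_mat m n" and Y: "Y \<in> carrier_mat n n" and h: "hermitian_on n Y"
  shows "hermitian_on m (K * Y * mat_adjoint K)"
  unfolding hermitian_on_def
proof (intro allI impI)
  fix x y assume x: "x < m" and y: "y < m"
  have "cnj ((K * Y * mat_adjoint K) $$ (y,x))
      = (\<Sum>a<n. \<Sum>b<n. cnj (K $$ (y,a)) * Y $$ (b,a) * K $$ (x,b))"
    unfolding index_congruence_mat[OF K Y y x] cnj_sum
    by (intro sum.cong refl) (simp add: hermitian_onD_cnj[OF h])
  also have "\<dots> = (\<Sum>b<n. \<Sum>a<n. cnj (K $$ (y,a)) * Y $$ (b,a) * K $$ (x,b))"
    by (rule sum.swap)
  also have "\<dots> = (K * Y * mat_adjoint K) $$ (x,y)"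
    unfolding index_congruence_mat[OF K Y x y] by (intro sum.cong refl) (simp add: algebra_simps)
  finally show "(K * Y * mat_adjoint K) $$ (x,y) = cnj ((K * Y * mat_adjoint K) $$ (y,x))" by simp
qed

lemma quad_form_congruence:
  assumes K: "K \<in> carrier_mat m n" and Y: "Y \<in> carrier_mat n n"
  shows "quad_form m (K * Y * mat_adjoint K) f
    = quad_form n Y (\<lambda>a. \<Sum>x<m. cnj (K $$ (x,a)) * f x)"
proof -
  let ?F = "\<lambda>x y a b. cnj (f x) * K $$ (x,a) * Y $$ (a,b) * cnj (K $$ (y,b)) * f y"
  have "quad_form m (K * Y * mat_adjoint K) f = (\<Sum>x<m. \<Sum>y<m. \<Sum>a<n. \<Sum>b<n. ?F x y a b)"
    unfolding quad_form_def
    by (intro sum.cong refl) (simp add: index_congruence_mat[OF K Y] sum_distrib_left sum_distrib_right mult.assoc)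
  also have "\<dots> = (\<Sum>x<m. \<Sum>a<n. \<Sum>y<m. \<Sum>b<n. ?F x y a b)"
    by (rule sum.cong[OF refl], rule sum.swap)
  also have "\<dots> = (\<Sum>a<n. \<Sum>x<m. \<Sum>y<m. \<Sum>b<n. ?F x y a b)"
    by (rule sum.swap)
  also have "\<dots> = (\<Sum>a<n. \<Sum>x<m. \<Sum>b<n. \<Sum>y<m. ?F x y a b)"
    by (rule sum.cong[OF refl], rule sum.cong[OF refl], rule sum.swap)
  also have "\<dots> = (\<Sum>a<n. \<Sum>b<n. \<Sum>x<m. \<Sum>y<m. ?F x y a b)"
    by (rule sum.cong[OF refl], rule sum.swap)
  also have "\<dots> = quad_form n Y (\<lambda>a. \<Sum>x<m. cnj (K $$ (x,a)) * f x)"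
    unfolding quad_form_def
    by (intro sum.cong refl) (simp add: cnj_sum sum_distrib_left sum_distrib_right algebra_simps)
  finally show ?thesis .
qed

lemma psd_congruence:
  assumes K: "K \<in> carrier_mat m n" and Y: "psd n Y"
  shows "psd m (K * Y * mat_adjoint K)"
proof (rule psdI)
  show "K * Y * mat_adjoint K \<in> carrier_mat m m" using K psdD(1)[OF Y] by auto
  show "hermitian_on m (K * Y * mat_adjoint K)"
    by (rule hermitian_on_congruence[OF K psdD(1,2)[OF Y]])
  show "0 \<le> Re (quad_form m (K * Y * mat_adjoint K) f)" for f
    unfolding quad_form_congruence[OF K psdD(1)[OF Y]] by (rule psdD(3)[OF Y])
qed

lemma diag_sum_isometry_congruence:
  fixes K Y :: "complex mat"
  assumes K: "K \<in> carrier_mat m n" and iso: "mat_adjoint K * K = 1\<^sub>m n" and Y: "Y \<in> carrier_mat n n"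
  shows "(\<Sum>x<m. (K * Y * mat_adjoint K) $$ (x,x)) = (\<Sum>a<n. Y $$ (a,a))"
proof -
  have KK: "(\<Sum>x<m. cnj (K $$ (x,b)) * K $$ (x,a)) = (if b = a then 1 else 0)"
    if "a < n" "b < n" for a b
    using index_mult_mat_sum[OF mat_adjoint_carrier_mat[OF K] K, of b a] iso K that by simp
  have "(\<Sum>x<m. (K * Y * mat_adjoint K) $$ (x,x))
      = (\<Sum>a<n. \<Sum>b<n. Y $$ (a,b) * (\<Sum>x<m. cnj (K $$ (x,b)) * K $$ (x,a)))"
    by (simp add: index_congruence_mat[OF K Y] sum_distrib_left sum.swap[of _ "{..<m}"] algebra_simps)
  also have "\<dots> = (\<Sum>a<n. Y $$ (a,a))"
    by (intro sum.cong refl) (simp add: KK sum_mult_delta_right)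
  finally show ?thesis .
qed

lemma psd_mat_sum:
  assumes Z: "\<And>e. e < k \<Longrightarrow> psd m (Z e)"
  shows "psd m (mat m m (\<lambda>(i,j). \<Sum>e<k. Z e $$ (i,j)))"
proof (rule psdI)
  let ?S = "mat m m (\<lambda>(i,j). \<Sum>e<k. Z e $$ (i,j))"
  show "?S \<in> carrier_mat m m" by simp
  show "hermitian_on m ?S"
    unfolding hermitian_on_def cnj_sum
    by (auto intro!: sum.cong simp: hermitian_onD_cnj[OF psdD(2)[OF Z]])
  show "0 \<le> Re (quad_form m ?S f)" for f
  proof -
    have "quad_form m ?S f = (\<Sum>e<k. quad_form m (Z e) f)"
      unfolding quad_form_def
      by (simp add: sum_distrib_left sum_distrib_right sum.swap[of _ "{..<k}"])
    then show ?thesis using psdD(3)[OF Z] by (simp add: Re_sum) (meson lessThan_iff sum_nonneg)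
  qed
qed

lemma psd_smult_nonneg:
  assumes c: "0 \<le> c" and A: "psd n A"
  shows "psd n (complex_of_real c \<cdot>\<^sub>m A)"
proof (rule psdI)
  show "complex_of_real c \<cdot>\<^sub>m A \<in> carrier_mat n n" using psdD(1)[OF A] by simp
  show "hermitian_on n (complex_of_real c \<cdot>\<^sub>m A)"
    unfolding hermitian_on_def using psdD(1)[OF A] by (simp add: hermitian_onD_cnj[OF psdD(2)[OF A]])
  show "0 \<le> Re (quad_form n (complex_of_real c \<cdot>\<^sub>m A) f)" for f
  proof -
    have "quad_form n (complex_of_real c \<cdot>\<^sub>m A) f = complex_of_real c * quad_form n A f"
      unfolding quad_form_def sum_distrib_left using psdD(1)[OF A]
      by (intro sum.cong refl) (simp add: algebra_simps)
    then show ?thesis using psdD(3)[OF A, of f] c by simp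
  qed
qed

definition ket_bra :: "nat \<Rightarrow> (nat \<Rightarrow> complex) \<Rightarrow> complex mat" where
  "ket_bra n u = mat n n (\<lambda>(j,k). u j * cnj (u k))"

lemma density_ket_bra:
  assumes u: "(\<Sum>k<n. u k * cnj (u k)) = 1"
  shows "density n (ket_bra n u)"
  unfolding density_iff_diag_sum
proof
  show "psd n (ket_bra n u)"
  proof (rule psdI)
    show "ket_bra n u \<in> carrier_mat n n" "hermitian_on n (ket_bra n u)"
      unfolding ket_bra_def hermitian_on_def by auto
    show "0 \<le> Re (quad_form n (ket_bra n u) f)" for f
    proof -
      define z where "z = (\<Sum>i<n. cnj (f i) * u i)"
      have "quad_form n (ket_bra n u) f = z * cnj z"
        unfolding quad_form_def ket_bra_def z_def cnj_sum sum_product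
        by (intro sum.cong refl) (simp add: algebra_simps)
      then show ?thesis by (simp flip: complex_norm_square)
    qed
  qed
  show "(\<Sum>i<n. ket_bra n u $$ (i,i)) = 1" using u unfolding ket_bra_def by simp
qed

section \<open>Schur complements and rank-one decompositions\<close>

definition schur_complement :: "nat \<Rightarrow> complex mat \<Rightarrow> nat \<Rightarrow> complex mat" where
  "schur_complement n A j = mat n n (\<lambda>(k,l). A $$ (k,l) - A $$ (k,j) * A $$ (j,l) / A $$ (j,j))"

lemma quad_form_schur_complement:
  fixes f :: "nat \<Rightarrow> complex"
  assumes h: "hermitian_on n A" and j: "j < n" and nz: "A $$ (j,j) \<noteq> 0"
  defines "a \<equiv> \<Sum>k<n. A $$ (j,k) * f k"
  shows "quad_form n (schur_complement n A j) f
    = quad_form n A (\<lambda>i. f i + (if i = j then - a / A $$ (j,j) else 0))"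
proof -
  define D where "D = A $$ (j,j)"
  have cD: "cnj D = D" unfolding D_def using hermitian_onD_cnj[OF h j j] .
  have ca: "cnj a = (\<Sum>i<n. cnj (f i) * A $$ (i,j))"
    unfolding a_def cnj_sum by (intro sum.cong refl) (simp add: hermitian_onD_cnj[OF h] j mult.commute)
  have "quad_form n (schur_complement n A j) f = (\<Sum>i<n. \<Sum>k<n.
      cnj (f i) * A $$ (i,k) * f k - (cnj (f i) * A $$ (i,j)) * (A $$ (j,k) * f k) / D)"
    unfolding quad_form_def
    by (intro sum.cong refl) (simp add: schur_complement_def D_def field_simps)
  also have "\<dots> = quad_form n A f - (\<Sum>i<n. cnj (f i) * A $$ (i,j)) * (\<Sum>k<n. A $$ (j,k) * f k) / D"
    unfolding quad_form_def sum_product by (simp add: sum_subtractf sum_divide_distrib)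
  also have "\<dots> = quad_form n A f + (- a / D) * cnj a + cnj (- a / D) * a + cnj (- a / D) * (- a / D) * D"
    using nz unfolding ca[symmetric] a_def[symmetric] D_def[symmetric]
    by (simp add: cD field_simps power2_eq_square)
  also have "\<dots> = quad_form n A (\<lambda>i. f i + (if i = j then - a / D else 0))"
    using quad_form_add_unit[OF j, of A f "- a / D"] unfolding ca[symmetric] a_def[symmetric] D_def
    by simp
  finally show ?thesis unfolding D_def .
qed

lemma psd_schur_complement:
  assumes A: "psd n A" and j: "j < n" and nz: "A $$ (j,j) \<noteq> 0"
  shows "psd n (schur_complement n A j)"
proof (rule psdI)
  show "schur_complement n A j \<in> carrier_mat n n" unfolding schur_complement_def by simp
  show "hermitian_on n (schur_complement n A j)"
    unfolding hermitian_on_def schur_complement_def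
    by (simp add: hermitian_onD_cnj[OF psdD(2)[OF A]] j mult.commute)
  show "0 \<le> Re (quad_form n (schur_complement n A j) f)" for f
    unfolding quad_form_schur_complement[OF psdD(2)[OF A] j nz] by (rule psdD(3)[OF A])
qed

text \<open>Eliminating the pivot j splits off the rank-one part v v* with v = A e_j / sqrt A_jj.\<close>
lemma psd_pivot_split:
  assumes A: "psd n A" and j: "j < n" and nz: "A $$ (j,j) \<noteq> 0"
  obtains v where "v j \<noteq> 0"
    "\<And>k l. k < n \<Longrightarrow> l < n \<Longrightarrow> A $$ (k,l) = schur_complement n A j $$ (k,l) + v k * cnj (v l)"
proof -
  define d where "d = Re (A $$ (j,j))"
  have Ajj: "A $$ (j,j) = complex_of_real d" unfolding d_def using psd_diag_real[OF A j] .
  have "d \<noteq> 0" using nz Ajj by auto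
  then have d: "d > 0" using psd_diag_nonneg[OF A j] unfolding d_def by linarith
  define v where "v k = A $$ (k,j) / complex_of_real (sqrt d)" for k
  have sq: "complex_of_real (sqrt d) * complex_of_real (sqrt d) = A $$ (j,j)"
    using d Ajj by (simp flip: of_real_mult)
  have "A $$ (k,l) = schur_complement n A j $$ (k,l) + v k * cnj (v l)" if "k < n" "l < n" for k l
  proof -
    have "v k * cnj (v l) = A $$ (k,j) * A $$ (j,l) / A $$ (j,j)"
      unfolding v_def sq[symmetric] using that j by (simp add: hermitian_onD_cnj[OF psdD(2)[OF A]])
    then show ?thesis using that unfolding schur_complement_def by simp
  qed
  moreover have "v j \<noteq> 0" unfolding v_def using nz d by simp
  ultimately show thesis using that by blast
qed

lemma schur_complement_diag_support:
  assumes A: "psd n A" and j: "j < n" and nz: "A $$ (j,j) \<noteq> 0"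
  shows "{k. k < n \<and> schur_complement n A j $$ (k,k) \<noteq> 0} \<subset> {k. k < n \<and> A $$ (k,k) \<noteq> 0}"
proof
  show "{k. k < n \<and> schur_complement n A j $$ (k,k) \<noteq> 0} \<subseteq> {k. k < n \<and> A $$ (k,k) \<noteq> 0}"
    using psd_diag_zero_imp_row_zero[OF A _ j] unfolding schur_complement_def by auto
  have "schur_complement n A j $$ (j,j) = 0" using j nz unfolding schur_complement_def by simp
  then show "{k. k < n \<and> schur_complement n A j $$ (k,k) \<noteq> 0} \<noteq> {k. k < n \<and> A $$ (k,k) \<noteq> 0}"
    using j nz by blast
qed

lemma outer_product_normalize:
  fixes w :: "nat \<Rightarrow> complex"
  assumes j: "j < n" and nz: "w j \<noteq> 0"
  obtains c u where "0 \<le> c" "(\<Sum>k<n. u k * cnj (u k)) = 1"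
    "\<And>k l. w k * cnj (w l) = complex_of_real c * (u k * cnj (u l))"
proof -
  define c where "c = (\<Sum>k<n. (cmod (w k))^2)"
  have c: "c > 0" unfolding c_def using j nz by (intro sum_pos2[of _ j]) auto
  define u where "u k = w k / complex_of_real (sqrt c)" for k
  have sq: "complex_of_real (sqrt c) * complex_of_real (sqrt c) = complex_of_real c"
    using c by (simp flip: of_real_mult)
  have "(\<Sum>k<n. w k * cnj (w k)) = complex_of_real c"
    unfolding c_def by (simp flip: complex_norm_square)
  then have "(\<Sum>k<n. u k * cnj (u k)) = 1"
    unfolding u_def using c by (simp add: sq[symmetric] flip: sum_divide_distrib)
  moreover have "w k * cnj (w l) = complex_of_real c * (u k * cnj (u l))" for k l
    unfolding u_def sq[symmetric] using c by (simp add: field_simps)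
  ultimately show thesis using that[of c u] c by simp
qed

text \<open>Repeated pivoting: each Schur complement has fewer nonzero diagonal entries.\<close>
lemma psd_eq_sum_ket_bra:
  assumes "psd n A"
  shows "\<exists>(m::nat) (c::nat \<Rightarrow> real) u. (\<forall>i<m. 0 \<le> c i \<and> (\<Sum>k<n. u i k * cnj (u i k)) = 1) \<and>
    (\<forall>k<n. \<forall>l<n. A $$ (k,l) = (\<Sum>i<m. complex_of_real (c i) * (u i k * cnj (u i l))))"
  using assms
proof (induction "card {j. j < n \<and> A $$ (j,j) \<noteq> 0}" arbitrary: A rule: less_induct)
  case less
  show ?case
  proof (cases "\<exists>j<n. A $$ (j,j) \<noteq> 0")
    case False
    then have "A $$ (k,l) = 0" if "k < n" "l < n" for k l
      using psd_diag_zero_imp_row_zero[OF less.prems] that by blast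
    then show ?thesis by (intro exI[of _ 0]) simp
  next
    case True
    then obtain j where j: "j < n" and nz: "A $$ (j,j) \<noteq> 0" by blast
    let ?S = "schur_complement n A j"
    have "card {k. k < n \<and> ?S $$ (k,k) \<noteq> 0} < card {k. k < n \<and> A $$ (k,k) \<noteq> 0}"
      by (rule psubset_card_mono[OF _ schur_complement_diag_support[OF less.prems j nz]]) simp
    from less.hyps[OF this psd_schur_complement[OF less.prems j nz]]
    obtain m :: nat and c :: "nat \<Rightarrow> real" and u :: "nat \<Rightarrow> nat \<Rightarrow> complex"
      where cu: "\<forall>i<m. 0 \<le> c i \<and> (\<Sum>k<n. u i k * cnj (u i k)) = 1"
      and S: "\<forall>k<n. \<forall>l<n. ?S $$ (k,l) = (\<Sum>i<m. complex_of_real (c i) * (u i k * cnj (u i l)))"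
      by blast
    obtain v where "v j \<noteq> 0"
      and A: "\<And>k l. k < n \<Longrightarrow> l < n \<Longrightarrow> A $$ (k,l) = ?S $$ (k,l) + v k * cnj (v l)"
      using psd_pivot_split[OF less.prems j nz] by blast
    obtain c0 u0 where "0 \<le> c0" "(\<Sum>k<n. u0 k * cnj (u0 k)) = 1"
      and v: "\<And>k l. v k * cnj (v l) = complex_of_real c0 * (u0 k * cnj (u0 l))"
      using outer_product_normalize[of j n v] j \<open>v j \<noteq> 0\<close> by blast
    show ?thesis
    proof (intro exI conjI)
      show "\<forall>i<Suc m. 0 \<le> (c(m := c0)) i \<and> (\<Sum>k<n. (u(m := u0)) i k * cnj ((u(m := u0)) i k)) = 1"
        using cu \<open>0 \<le> c0\<close> \<open>(\<Sum>k<n. u0 k * cnj (u0 k)) = 1\<close> by (simp add: less_Suc_eq)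
      show "\<forall>k<n. \<forall>l<n. A $$ (k,l)
          = (\<Sum>i<Suc m. complex_of_real ((c(m := c0)) i) * ((u(m := u0)) i k * cnj ((u(m := u0)) i l)))"
        using A S v by simp
    qed
  qed
qed

lemma pure_state_eq_ket_bra:
  assumes P: "pure_state n \<rho>"
  obtains u where "(\<Sum>k<n. u k * cnj (u k)) = 1" "\<rho> = ket_bra n u"
proof -
  have R: "psd n \<rho>" and tr: "(\<Sum>i<n. \<rho> $$ (i,i)) = 1" and idem: "\<rho> * \<rho> = \<rho>"
    using P densityD unfolding pure_state_def by auto
  obtain j where j: "j < n" and nz: "\<rho> $$ (j,j) \<noteq> 0"
    using tr by (metis (no_types, lifting) lessThan_iff sum.neutral zero_neq_one)
  obtain v where v: "\<And>k l. k < n \<Longrightarrow> l < n \<Longrightarrow> \<rho> $$ (k,l) = schur_complement n \<rho> j $$ (k,l) + v k * cnj (v l)"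
    using psd_pivot_split[OF R j nz] by blast
  have "(\<Sum>k<n. \<rho> $$ (j,k) * \<rho> $$ (k,j)) = \<rho> $$ (j,j)"
    using idem index_mult_mat_sum[OF psdD(1)[OF R] psdD(1)[OF R] j j] by simp
  then have "(\<Sum>k<n. schur_complement n \<rho> j $$ (k,k)) = 0"
    using tr nz unfolding schur_complement_def
    by (simp add: sum_subtractf mult.commute flip: sum_divide_distrib)
  then have S: "schur_complement n \<rho> j = 0\<^sub>m n n"
    by (rule psd_diag_sum_zero[OF psd_schur_complement[OF R j nz]])
  show thesis
  proof
    show \<rho>: "\<rho> = ket_bra n v"
      by (rule eq_matI) (use psdD(1)[OF R] v S in \<open>auto simp: ket_bra_def\<close>)
    show "(\<Sum>k<n. v k * cnj (v k)) = 1"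
      using tr unfolding \<rho> ket_bra_def by simp
  qed
qed

section \<open>Characteristic polynomials and entropy\<close>

lemma det_four_block_mat_one_lower_right:
  fixes A B C :: "'a :: idom mat"
  assumes A: "A \<in> carrier_mat m m" and B: "B \<in> carrier_mat m n" and C: "C \<in> carrier_mat n m"
  shows "det (four_block_mat A B C (1\<^sub>m n)) = det (A - B * C)"
proof -
  let ?M = "four_block_mat A B C (1\<^sub>m n)"
  let ?L = "four_block_mat (1\<^sub>m m) (- B) (0\<^sub>m n m) (1\<^sub>m n)"
  have "?L * ?M = four_block_mat (1\<^sub>m m * A + (- B) * C) (1\<^sub>m m * B + (- B) * 1\<^sub>m n)
      (0\<^sub>m n m * A + 1\<^sub>m n * C) (0\<^sub>m n m * B + 1\<^sub>m n * 1\<^sub>m n)"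
    by (rule mult_four_block_mat) (use A B C in auto)
  also have "1\<^sub>m m * A + (- B) * C = A - B * C"
    using A B C by (simp add: minus_add_uminus_mat)
  also have "1\<^sub>m m * B + (- B) * 1\<^sub>m n = 0\<^sub>m m n"
    using B by (intro eq_matI) auto
  finally have LM: "?L * ?M = four_block_mat (A - B * C) (0\<^sub>m m n) C (1\<^sub>m n)"
    using A B C by simp
  have "det ?L = 1"
    by (subst det_four_block_mat_lower_left_zero[of _ m _ n]) (use B in auto)
  then have "det ?M = det (?L * ?M)"
    by (subst det_mult[of _ "m + n"]) (use A B C in auto)
  also have "\<dots> = det (A - B * C)"
    unfolding LM by (subst det_four_block_mat_upper_right_zero[of _ m _ n]) (use A B C in auto)
  finally show ?thesis .
qed

lemma det_four_block_mat_scalar_one: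
  fixes B C :: "'a :: idom mat"
  assumes B: "B \<in> carrier_mat m n" and C: "C \<in> carrier_mat n m"
  shows "x ^ n * det (four_block_mat (x \<cdot>\<^sub>m 1\<^sub>m m) B C (1\<^sub>m n)) = x ^ m * det (x \<cdot>\<^sub>m 1\<^sub>m n - C * B)"
proof -
  let ?M = "four_block_mat (x \<cdot>\<^sub>m 1\<^sub>m m) B C (1\<^sub>m n)"
  let ?R = "four_block_mat (1\<^sub>m m) (0\<^sub>m m n) (- C) (x \<cdot>\<^sub>m 1\<^sub>m n)"
  have "?R * ?M = four_block_mat (1\<^sub>m m * (x \<cdot>\<^sub>m 1\<^sub>m m) + 0\<^sub>m m n * C) (1\<^sub>m m * B + 0\<^sub>m m n * 1\<^sub>m n)
      ((- C) * (x \<cdot>\<^sub>m 1\<^sub>m m) + (x \<cdot>\<^sub>m 1\<^sub>m n) * C) ((- C) * B + (x \<cdot>\<^sub>m 1\<^sub>m n) * 1\<^sub>m n)"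
    by (rule mult_four_block_mat) (use B C in auto)
  also have "(- C) * (x \<cdot>\<^sub>m 1\<^sub>m m) + (x \<cdot>\<^sub>m 1\<^sub>m n) * C = 0\<^sub>m n m"
    using C by (intro eq_matI) auto
  also have "(- C) * B + (x \<cdot>\<^sub>m 1\<^sub>m n) * 1\<^sub>m n = x \<cdot>\<^sub>m 1\<^sub>m n - C * B"
    using B C by (intro eq_matI) auto
  finally have RM: "?R * ?M = four_block_mat (x \<cdot>\<^sub>m 1\<^sub>m m) B (0\<^sub>m n m) (x \<cdot>\<^sub>m 1\<^sub>m n - C * B)"
    using B C by simp
  have "det ?R = x ^ n"
    by (subst det_four_block_mat_upper_right_zero[of _ m _ n]) (use C in auto)
  then have "x ^ n * det ?M = det (?R * ?M)"
    by (subst det_mult[of _ "m + n"]) (use B C in auto)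
  also have "\<dots> = x ^ m * det (x \<cdot>\<^sub>m 1\<^sub>m n - C * B)"
    unfolding RM by (subst det_four_block_mat_lower_left_zero[of _ m _ n]) (use B C in auto)
  finally show ?thesis .
qed

lemma char_poly_matrix_mult:
  assumes A: "A \<in> carrier_mat m n" and B: "B \<in> carrier_mat n m"
  shows "char_poly_matrix (A * B) = [:0,1:] \<cdot>\<^sub>m 1\<^sub>m m - map_mat (\<lambda>a. [:a:]) A * map_mat (\<lambda>a. [:a:]) B"
  unfolding map_poly_mult(1)[OF A B, symmetric] char_poly_matrix_def
  by (rule eq_matI) (use A B in auto)

text \<open>Sylvester's determinant identity: AB and BA have the same nonzero eigenvalues.\<close>
lemma char_poly_mult_commute:
  fixes A B :: "'a :: idom mat"
  assumes A: "A \<in> carrier_mat m n" and B: "B \<in> carrier_mat n m"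
  shows "[:0,1:] ^ n * char_poly (A * B) = [:0,1:] ^ m * char_poly (B * A)"
proof -
  let ?A = "map_mat (\<lambda>a. [:a:]) A" and ?B = "map_mat (\<lambda>a. [:a:]) B"
  have "char_poly (A * B) = det (four_block_mat ([:0,1:] \<cdot>\<^sub>m 1\<^sub>m m) ?A ?B (1\<^sub>m n))"
    unfolding char_poly_def char_poly_matrix_mult[OF A B]
    by (rule det_four_block_mat_one_lower_right[symmetric]) (use A B in auto)
  then show ?thesis
    unfolding char_poly_def char_poly_matrix_mult[OF B A]
    using det_four_block_mat_scalar_one[of ?A m n ?B "[:0,1:]"] A B by simp
qed

lemma char_poly_nonzero: "A \<in> carrier_mat n n \<Longrightarrow> char_poly (A :: complex mat) \<noteq> 0"
  using degree_monic_char_poly[of A n] by auto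

lemma proots_monom_mult:
  "p \<noteq> 0 \<Longrightarrow> proots ([:0,1:] ^ k * (p :: complex poly)) = replicate_mset k 0 + proots p"
  by (simp add: proots_mult proots_power proots_linear_factor[of 0, simplified])

text \<open>Zero eigenvalues do not contribute to the entropy, since ln 0 = 0.\<close>
lemma vn_entropy_eq_if_char_poly_eq_up_to_zeros:
  fixes P Q :: "complex mat"
  assumes P: "P \<in> carrier_mat p p" and Q: "Q \<in> carrier_mat q q"
    and e: "[:0,1:] ^ a * char_poly P = [:0,1:] ^ b * char_poly Q"
  shows "vn_entropy P = vn_entropy Q"
proof -
  have "replicate_mset a 0 + proots (char_poly P) = replicate_mset b 0 + proots (char_poly Q)"
    using arg_cong[OF e, of proots]
    by (simp add: proots_monom_mult char_poly_nonzero[OF P] char_poly_nonzero[OF Q])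
  then have "(\<Sum>x\<in>#replicate_mset a 0 + proots (char_poly P). Re x * ln (Re x))
      = (\<Sum>x\<in>#replicate_mset b 0 + proots (char_poly Q). Re x * ln (Re x))"
    by simp
  then show ?thesis unfolding vn_entropy_def by simp
qed

lemma vn_entropy_mult_adjoint:
  assumes M: "M \<in> carrier_mat m n"
  shows "vn_entropy (M * mat_adjoint M) = vn_entropy (transpose_mat (mat_adjoint M * M))"
proof -
  have "vn_entropy (M * mat_adjoint M) = vn_entropy (mat_adjoint M * M)"
    by (rule vn_entropy_eq_if_char_poly_eq_up_to_zeros
        [OF _ _ char_poly_mult_commute[OF M mat_adjoint_carrier_mat[OF M]]])
      (use M in auto)
  also have "\<dots> = vn_entropy (transpose_mat (mat_adjoint M * M))"
    unfolding vn_entropy_def using M by (subst char_poly_transpose_mat[of _ n]) auto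
  finally show ?thesis .
qed

lemma neg_mult_ln_bounds:
  fixes t :: real
  assumes "0 \<le> t" "t \<le> 1"
  shows "0 \<le> - (t * ln t)" "- (t * ln t) \<le> 1"
proof -
  have "0 \<le> - (t * ln t) \<and> - (t * ln t) \<le> 1 - t"
  proof (cases "t = 0")
    case False
    then have t: "0 < t" using assms by simp
    have "- ln t \<le> 1 / t - 1" using ln_le_minus_one[of "1 / t"] t by (simp add: ln_div)
    then have "t * - ln t \<le> t * (1 / t - 1)" using t by (intro mult_left_mono) auto
    also have "\<dots> = 1 - t" using t by (simp add: field_simps)
    finally have "- (t * ln t) \<le> 1 - t" by simp
    moreover have "t * ln t \<le> 0" using t assms by (simp add: mult_nonneg_nonpos)
    ultimately show ?thesis by simp
  qed simp
  then show "0 \<le> - (t * ln t)" "- (t * ln t) \<le> 1" using assms by auto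
qed

lemma proots_prod_list_linear_factors: "proots (\<Prod>a\<leftarrow>as. [:- a, 1:]) = mset (as :: complex list)"
proof (induction as)
  case (Cons a as)
  have "(\<Prod>a\<leftarrow>as. [:- a, 1:]) \<noteq> (0 :: complex poly)" by (auto simp: prod_list_zero_iff)
  then have "proots ([:- a, 1:] * (\<Prod>a\<leftarrow>as. [:- a, 1:])) = {#a#} + mset as"
    by (subst proots_mult) (auto simp: Cons.IH)
  then show ?case by (simp only: list.map prod_list.Cons) simp
qed simp

lemma diag_sum_mult_commute:
  fixes A C :: "complex mat"
  assumes A: "A \<in> carrier_mat n k" and C: "C \<in> carrier_mat k n"
  shows "(\<Sum>i<n. (A * C) $$ (i,i)) = (\<Sum>j<k. (C * A) $$ (j,j))"
proof -
  have "(\<Sum>i<n. (A * C) $$ (i,i)) = (\<Sum>i<n. \<Sum>j<k. A $$ (i,j) * C $$ (j,i))"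
    by (simp add: index_mult_mat_sum[OF A C])
  also have "\<dots> = (\<Sum>j<k. \<Sum>i<n. C $$ (j,i) * A $$ (i,j))"
    by (subst sum.swap) (simp add: mult.commute)
  also have "\<dots> = (\<Sum>j<k. (C * A) $$ (j,j))"
    by (simp add: index_mult_mat_sum[OF C A])
  finally show ?thesis .
qed

lemma psd_eigenvalue_nonneg:
  assumes X: "psd n X" and a: "poly (char_poly X) a = 0"
  shows "0 \<le> Re a"
proof -
  have "eigenvalue X a" using eigenvalue_root_char_poly[OF psdD(1)[OF X]] a by simp
  then obtain v where "eigenvector X v a" unfolding eigenvalue_def by auto
  then have v: "v \<in> carrier_vec n" and vnz: "v \<noteq> 0\<^sub>v n" and Xv: "X *\<^sub>v v = a \<cdot>\<^sub>v v"
    unfolding eigenvector_def using psdD(1)[OF X] by auto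
  define s where "s = (\<Sum>i<n. (cmod (v $ i))^2)"
  obtain i where i: "i < n" and vi: "v $ i \<noteq> 0"
    using vnz v by (metis eq_vecI carrier_vecD index_zero_vec)
  have s: "s > 0" unfolding s_def using i vi by (intro sum_pos2[of _ i]) auto
  have "conjugate v \<bullet> v = (\<Sum>i<n. v $ i * cnj (v $ i))"
    using v by (simp add: scalar_prod_def lessThan_atLeast0 mult.commute)
  also have "\<dots> = complex_of_real s" unfolding s_def by (simp flip: complex_norm_square)
  finally have "quad_form n X (\<lambda>i. v $ i) = a * complex_of_real s"
    using quad_form_vec[OF psdD(1)[OF X] v] v unfolding Xv by simp
  then have "0 \<le> Re a * s" using psdD(3)[OF X, of "\<lambda>i. v $ i"] by simp
  then show ?thesis using s by (simp add: zero_le_mult_iff)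
qed

lemma density_eigenvalues:
  assumes X: "density n X"
  obtains as where "proots (char_poly X) = mset as" "\<And>a. a \<in> set as \<Longrightarrow> 0 \<le> Re a"
    "(\<Sum>a\<leftarrow>as. Re a) = 1" "length as = n"
proof -
  have Xc: "X \<in> carrier_mat n n" using densityD(2)[OF X] .
  obtain as where cp: "char_poly X = (\<Prod>a\<leftarrow>as. [:- a, 1:])" and len: "length as = n"
    using char_poly_factorized[OF Xc] by auto
  have pr: "proots (char_poly X) = mset as"
    unfolding cp by (rule proots_prod_list_linear_factors)
  have nn: "0 \<le> Re a" if "a \<in> set as" for a
  proof (rule psd_eigenvalue_nonneg[OF densityD(1)[OF X]])
    show "poly (char_poly X) a = 0"
      using pr that set_count_proots[OF char_poly_nonzero[OF Xc]] by auto
  qed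
  obtain B P Q where "schur_decomposition X as = (B,P,Q)" by (cases "schur_decomposition X as")
  from schur_decomposition[OF Xc cp this] have "similar_mat_wit X B P Q" and dg: "diag_mat B = as"
    by auto
  then have B: "B \<in> carrier_mat n n" and P: "P \<in> carrier_mat n n" and Q: "Q \<in> carrier_mat n n"
    and QP: "Q * P = 1\<^sub>m n" and XPBQ: "X = P * B * Q"
    using Xc unfolding similar_mat_wit_def Let_def by auto
  have "(\<Sum>i<n. X $$ (i,i)) = (\<Sum>i<n. (Q * (P * B)) $$ (i,i))"
    unfolding XPBQ by (rule diag_sum_mult_commute) (use P B Q in auto)
  also have "Q * (P * B) = B" using QP P B Q by (simp flip: assoc_mult_mat[of Q n n P n B n])
  also have "(\<Sum>i<n. B $$ (i,i)) = sum_list as"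
    unfolding dg[symmetric] diag_mat_def using B
    by (simp add: sum_set_upt_conv_sum_list_nat[symmetric] lessThan_atLeast0)
  finally have "sum_list as = 1" using densityD(3)[OF X] by simp
  moreover have "(\<Sum>a\<leftarrow>as. Re a) = Re (sum_list as)" by (induction as) auto
  ultimately have "(\<Sum>a\<leftarrow>as. Re a) = 1" by simp
  with pr nn len show thesis using that by blast
qed

lemma vn_entropy_bounds:
  assumes X: "density n X"
  shows "0 \<le> vn_entropy X" "vn_entropy X \<le> real n"
proof -
  obtain as where pr: "proots (char_poly X) = mset as" and nn: "\<And>a. a \<in> set as \<Longrightarrow> 0 \<le> Re a"
    and sum: "(\<Sum>a\<leftarrow>as. Re a) = 1" and len: "length as = n"
    using density_eigenvalues[OF X] by blast
  have le1: "Re a \<le> 1" if "a \<in> set as" for a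
    using member_le_sum_list[of "Re a" "map Re as"] that nn sum by auto
  have S: "vn_entropy X = (\<Sum>a\<leftarrow>as. - (Re a * ln (Re a)))"
    unfolding vn_entropy_def pr by (induction as) auto
  show "0 \<le> vn_entropy X"
    unfolding S using neg_mult_ln_bounds(1)[OF nn le1] by (intro sum_list_nonneg) auto
  have "(\<Sum>a\<leftarrow>as. - (Re a * ln (Re a))) \<le> (\<Sum>a\<leftarrow>as. 1)"
    using neg_mult_ln_bounds(2)[OF nn le1] by (intro sum_list_mono) auto
  then show "vn_entropy X \<le> real n" unfolding S using len by (simp add: sum_list_triv)
qed

section \<open>Partial traces and coherent information\<close>

definition selection_mat :: "nat \<Rightarrow> nat \<Rightarrow> (nat \<Rightarrow> nat) \<Rightarrow> complex mat" where
  "selection_mat p N s = mat p N (\<lambda>(i,x). if x = s i then 1 else 0)"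

lemma index_congruence_selection_mat:
  assumes Y: "Y \<in> carrier_mat N N" and s: "\<And>i. i < p \<Longrightarrow> s i < N" and i: "i < p" and j: "j < p"
  shows "(selection_mat p N s * Y * mat_adjoint (selection_mat p N s)) $$ (i,j) = Y $$ (s i, s j)"
proof -
  have K: "selection_mat p N s \<in> carrier_mat p N" unfolding selection_mat_def by simp
  have c: "cnj (if y = s j then 1 else 0) = (if y = s j then 1 else 0)" for y by simp
  have "(selection_mat p N s * Y * mat_adjoint (selection_mat p N s)) $$ (i,j)
      = (\<Sum>x<N. (if x = s i then 1 else 0) * (\<Sum>y<N. Y $$ (x,y) * (if y = s j then 1 else 0)))"
    unfolding index_congruence_mat[OF K Y i j] using i j
    by (intro sum.cong refl) (simp add: selection_mat_def sum_distrib_left c)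
  also have "\<dots> = Y $$ (s i, s j)"
    using s[OF i] s[OF j] by (simp add: sum_mult_delta_left sum_mult_delta_right)
  finally show ?thesis .
qed

text \<open>Tr_E Y = \<Sum>_e K_e Y K_e* with K_e = 1 \<otimes> <e|, and Tr_B Y = \<Sum>_b K_b Y K_b* with
  K_b = <b| \<otimes> 1.\<close>
lemma ptrace_E_eq_sum_congruence:
  assumes Y: "Y \<in> carrier_mat (dB * dE) (dB * dE)"
  shows "ptrace_E dB dE Y = mat dB dB (\<lambda>(i,j). \<Sum>e<dE.
    (selection_mat dB (dB * dE) (\<lambda>b. b * dE + e) * Y
      * mat_adjoint (selection_mat dB (dB * dE) (\<lambda>b. b * dE + e))) $$ (i,j))"
  by (rule eq_matI)
    (auto simp: ptrace_E_def index_congruence_selection_mat[OF Y] tensor_index_less intro!: sum.cong)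

lemma ptrace_B_eq_sum_congruence:
  assumes Y: "Y \<in> carrier_mat (dB * dE) (dB * dE)"
  shows "ptrace_B dB dE Y = mat dE dE (\<lambda>(i,j). \<Sum>b<dB.
    (selection_mat dE (dB * dE) (\<lambda>e. b * dE + e) * Y
      * mat_adjoint (selection_mat dE (dB * dE) (\<lambda>e. b * dE + e))) $$ (i,j))"
  by (rule eq_matI)
    (auto simp: ptrace_B_def index_congruence_selection_mat[OF Y] tensor_index_less intro!: sum.cong)

lemma density_ptrace_E:
  assumes Y: "density (dB * dE) Y"
  shows "density dB (ptrace_E dB dE Y)"
  unfolding density_iff_diag_sum
proof
  show "psd dB (ptrace_E dB dE Y)"
    unfolding ptrace_E_eq_sum_congruence[OF densityD(2)[OF Y]]
    by (intro psd_mat_sum psd_congruence[OF _ densityD(1)[OF Y]]) (simp add: selection_mat_def)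
  show "(\<Sum>i<dB. ptrace_E dB dE Y $$ (i,i)) = 1"
    using densityD(3)[OF Y] unfolding sum_lessThan_mult_nat by (simp add: ptrace_E_def)
qed

lemma density_ptrace_B:
  assumes Y: "density (dB * dE) Y"
  shows "density dE (ptrace_B dB dE Y)"
  unfolding density_iff_diag_sum
proof
  show "psd dE (ptrace_B dB dE Y)"
    unfolding ptrace_B_eq_sum_congruence[OF densityD(2)[OF Y]]
    by (intro psd_mat_sum psd_congruence[OF _ densityD(1)[OF Y]]) (simp add: selection_mat_def)
  show "(\<Sum>i<dE. ptrace_B dB dE Y $$ (i,i)) = 1"
    using densityD(3)[OF Y] unfolding sum_lessThan_mult_nat
    by (simp add: ptrace_B_def sum.swap[of _ "{..<dE}"])
qed

lemma density_isometry_congruence: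
  assumes V: "isometry dA dB dE V" and w: "density dA \<omega>"
  shows "density (dB * dE) (V * \<omega> * mat_adjoint V)"
proof -
  have V: "V \<in> carrier_mat (dB * dE) dA" "mat_adjoint V * V = 1\<^sub>m dA"
    using V unfolding isometry_def by auto
  show ?thesis unfolding density_iff_diag_sum
    using psd_congruence[OF V(1) densityD(1)[OF w]]
      diag_sum_isometry_congruence[OF V densityD(2)[OF w]] densityD(3)[OF w]
    by simp
qed

lemma density_channel:
  "isometry dA dB dE V \<Longrightarrow> density dA \<omega> \<Longrightarrow> density dB (channel dB dE V \<omega>)"
  unfolding channel_def using density_ptrace_E density_isometry_congruence by blast

lemma density_compl_channel:
  "isometry dA dB dE V \<Longrightarrow> density dA \<omega> \<Longrightarrow> density dE (compl_channel dB dE V \<omega>)"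
  unfolding compl_channel_def using density_ptrace_B density_isometry_congruence by blast

lemma congruence_ket_bra:
  assumes V: "V \<in> carrier_mat N n"
  shows "V * ket_bra n u * mat_adjoint V = ket_bra N (\<lambda>x. \<Sum>a<n. V $$ (x,a) * u a)"
proof (rule eq_matI)
  fix x y assume "x < dim_row (ket_bra N (\<lambda>x. \<Sum>a<n. V $$ (x,a) * u a))"
    "y < dim_col (ket_bra N (\<lambda>x. \<Sum>a<n. V $$ (x,a) * u a))"
  then have x: "x < N" and y: "y < N" unfolding ket_bra_def by auto
  have P: "ket_bra n u \<in> carrier_mat n n" unfolding ket_bra_def by simp
  have "(V * ket_bra n u * mat_adjoint V) $$ (x,y)
      = (\<Sum>a<n. \<Sum>b<n. (V $$ (x,a) * u a) * cnj (V $$ (y,b) * u b))"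
    unfolding index_congruence_mat[OF V P x y] by (intro sum.cong refl) (simp add: ket_bra_def)
  also have "\<dots> = ket_bra N (\<lambda>x. \<Sum>a<n. V $$ (x,a) * u a) $$ (x,y)"
    using x y by (simp add: ket_bra_def sum_product cnj_sum)
  finally show "(V * ket_bra n u * mat_adjoint V) $$ (x,y) = ket_bra N (\<lambda>x. \<Sum>a<n. V $$ (x,a) * u a) $$ (x,y)" .
qed (use V in \<open>auto simp: ket_bra_def\<close>)

lemma ptrace_E_ket_bra:
  "ptrace_E dB dE (ket_bra (dB * dE) w)
    = mat dB dE (\<lambda>(b,e). w (b * dE + e)) * mat_adjoint (mat dB dE (\<lambda>(b,e). w (b * dE + e)))"
  by (rule eq_matI) (auto simp: ptrace_E_def ket_bra_def tensor_index_less
      scalar_prod_def lessThan_atLeast0 intro!: sum.cong)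

lemma ptrace_B_ket_bra:
  "ptrace_B dB dE (ket_bra (dB * dE) w)
    = transpose_mat (mat_adjoint (mat dB dE (\<lambda>(b,e). w (b * dE + e))) * mat dB dE (\<lambda>(b,e). w (b * dE + e)))"
  by (rule eq_matI) (auto simp: ptrace_B_def ket_bra_def tensor_index_less
      scalar_prod_def lessThan_atLeast0 intro!: sum.cong)

lemma coh_info_ket_bra:
  assumes V: "isometry dA dB dE V"
  shows "coh_info dB dE V (ket_bra dA u) = 0"
proof -
  have "V \<in> carrier_mat (dB * dE) dA" using V unfolding isometry_def by auto
  then show ?thesis
    unfolding coh_info_def channel_def compl_channel_def congruence_ket_bra[OF \<open>V \<in> _\<close>]
      ptrace_E_ket_bra ptrace_B_ket_bra
    by (simp add: vn_entropy_mult_adjoint[of _ dB dE])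
qed

lemma coh_info_pure_state:
  "isometry dA dB dE V \<Longrightarrow> pure_state dA \<rho> \<Longrightarrow> coh_info dB dE V \<rho> = 0"
  using pure_state_eq_ket_bra coh_info_ket_bra by metis

section \<open>Ensembles and private information\<close>

lemma coh_info_bounds:
  assumes V: "isometry dA dB dE V" and w: "density dA \<omega>"
  shows "- real dE \<le> coh_info dB dE V \<omega>" "coh_info dB dE V \<omega> \<le> real dB"
  using vn_entropy_bounds[OF density_channel[OF V w]] vn_entropy_bounds[OF density_compl_channel[OF V w]]
  unfolding coh_info_def by auto

lemma density_ens_avg:
  assumes E: "ensemble dA N p rs"
  shows "density dA (ens_avg dA N p rs)"
  unfolding density_iff_diag_sum
proof
  have p: "\<And>i. i < N \<Longrightarrow> 0 \<le> p i" and rs: "\<And>i. i < N \<Longrightarrow> density dA (rs i)"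
    and p1: "(\<Sum>i<N. p i) = 1"
    using E unfolding ensemble_def by auto
  have "ens_avg dA N p rs = mat dA dA (\<lambda>(j,k). \<Sum>i<N. (complex_of_real (p i) \<cdot>\<^sub>m rs i) $$ (j,k))"
  proof (rule eq_matI)
    fix j k assume "j < dim_row (mat dA dA (\<lambda>(j,k). \<Sum>i<N. (complex_of_real (p i) \<cdot>\<^sub>m rs i) $$ (j,k)))"
      "k < dim_col (mat dA dA (\<lambda>(j,k). \<Sum>i<N. (complex_of_real (p i) \<cdot>\<^sub>m rs i) $$ (j,k)))"
    then have jk: "j < dA" "k < dA" by auto
    have "(complex_of_real (p i) \<cdot>\<^sub>m rs i) $$ (j,k) = complex_of_real (p i) * rs i $$ (j,k)"
      if "i < N" for i
      using densityD(2)[OF rs[OF that]] jk by simp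
    then show "ens_avg dA N p rs $$ (j,k)
        = mat dA dA (\<lambda>(j,k). \<Sum>i<N. (complex_of_real (p i) \<cdot>\<^sub>m rs i) $$ (j,k)) $$ (j,k)"
      using jk unfolding ens_avg_def by simp
  qed (simp_all add: ens_avg_def)
  then show "psd dA (ens_avg dA N p rs)"
    using psd_mat_sum[of N dA] psd_smult_nonneg p densityD(1)[OF rs] by simp
  have "(\<Sum>j<dA. ens_avg dA N p rs $$ (j,j))
      = (\<Sum>i<N. complex_of_real (p i) * (\<Sum>j<dA. rs i $$ (j,j)))"
    unfolding ens_avg_def by (simp add: sum.swap[of _ "{..<N}"] sum_distrib_left)
  also have "\<dots> = 1"
    using densityD(3)[OF rs] p1 by (simp flip: of_real_sum)
  finally show "(\<Sum>j<dA. ens_avg dA N p rs $$ (j,j)) = 1" .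
qed

lemma private_info_le:
  assumes V: "isometry dA dB dE V" and E: "ensemble dA N p rs"
  shows "private_info dA dB dE V N p rs \<le> real dB + real dE"
proof -
  have p: "\<And>i. i < N \<Longrightarrow> 0 \<le> p i" and rs: "\<And>i. i < N \<Longrightarrow> density dA (rs i)"
    and p1: "(\<Sum>i<N. p i) = 1"
    using E unfolding ensemble_def by auto
  have "- real dE = (\<Sum>i<N. p i) * - real dE" using p1 by simp
  also have "\<dots> = (\<Sum>i<N. p i * - real dE)" by (rule sum_distrib_right)
  also have "\<dots> \<le> (\<Sum>i<N. p i * coh_info dB dE V (rs i))"
    by (intro sum_mono mult_left_mono) (use p coh_info_bounds(1)[OF V rs] in auto)
  finally show ?thesis
    using coh_info_bounds(2)[OF V density_ens_avg[OF E]] unfolding private_info_def by linarith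
qed

lemma private_info_le_P1:
  assumes V: "isometry dA dB dE V" and E: "ensemble dA N p rs"
  shows "private_info dA dB dE V N p rs \<le> P1 dA dB dE V"
  unfolding P1_def
proof (rule cSup_upper)
  show "bdd_above {private_info dA dB dE V n p rs | n p rs. ensemble dA n p rs}"
    by (rule bdd_aboveI[of _ "real dB + real dE"]) (use private_info_le[OF V] in auto)
qed (use E in blast)

lemma ensemble_split_off:
  assumes \<sigma>: "density dA \<sigma>" and R: "density dA R" and r': "0 < r'"
    and D: "psd dA (\<sigma> - complex_of_real r' \<cdot>\<^sub>m R)"
  obtains m c u where
    "ensemble dA (Suc m) (case_nat r' c) (case_nat R (\<lambda>i. ket_bra dA (u i)))"
    "ens_avg dA (Suc m) (case_nat r' c) (case_nat R (\<lambda>i. ket_bra dA (u i))) = \<sigma>"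
proof -
  let ?D = "\<sigma> - complex_of_real r' \<cdot>\<^sub>m R"
  obtain m :: nat and c :: "nat \<Rightarrow> real" and u :: "nat \<Rightarrow> nat \<Rightarrow> complex"
    where cu: "\<forall>i<m. 0 \<le> c i \<and> (\<Sum>k<dA. u i k * cnj (u i k)) = 1"
      and dec: "\<forall>k<dA. \<forall>l<dA. ?D $$ (k,l) = (\<Sum>i<m. complex_of_real (c i) * (u i k * cnj (u i l)))"
    using psd_eq_sum_ket_bra[OF D] by blast
  have Dkl: "?D $$ (k,l) = \<sigma> $$ (k,l) - complex_of_real r' * R $$ (k,l)" if "k < dA" "l < dA" for k l
    using that densityD(2)[OF \<sigma>] densityD(2)[OF R] by simp
  have "complex_of_real (\<Sum>i<m. c i)
      = (\<Sum>i<m. complex_of_real (c i) * (\<Sum>k<dA. u i k * cnj (u i k)))"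
    using cu by simp
  also have "\<dots> = (\<Sum>k<dA. ?D $$ (k,k))"
    using dec by (simp add: sum.swap[of _ "{..<m}"] sum_distrib_left)
  also have "\<dots> = complex_of_real (1 - r')"
    using densityD(3)[OF \<sigma>] densityD(3)[OF R]
    by (simp add: Dkl sum_subtractf flip: sum_distrib_left)
  finally have c1: "(\<Sum>i<m. c i) = 1 - r'" by (simp only: of_real_eq_iff)
  show thesis
  proof
    show "ensemble dA (Suc m) (case_nat r' c) (case_nat R (\<lambda>i. ket_bra dA (u i)))"
      unfolding ensemble_def sum.lessThan_Suc_shift
      using r' cu c1 R density_ket_bra by (auto simp: less_Suc_eq_0_disj)
    show "ens_avg dA (Suc m) (case_nat r' c) (case_nat R (\<lambda>i. ket_bra dA (u i))) = \<sigma>"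
    proof (rule eq_matI)
      fix k l assume "k < dim_row \<sigma>" "l < dim_col \<sigma>"
      then have k: "k < dA" and l: "l < dA" using densityD(2)[OF \<sigma>] by auto
      have "ens_avg dA (Suc m) (case_nat r' c) (case_nat R (\<lambda>i. ket_bra dA (u i))) $$ (k,l)
          = complex_of_real r' * R $$ (k,l) + ?D $$ (k,l)"
        using k l dec unfolding ens_avg_def sum.lessThan_Suc_shift by (simp add: ket_bra_def)
      then show "ens_avg dA (Suc m) (case_nat r' c) (case_nat R (\<lambda>i. ket_bra dA (u i))) $$ (k,l)
          = \<sigma> $$ (k,l)"
        using Dkl[OF k l] by simp
    qed (use densityD(2)[OF \<sigma>] in \<open>simp_all add: ens_avg_def\<close>)
  qed
qed

lemma private_info_split_off:
  assumes V: "isometry dA dB dE V" and \<sigma>: "density dA \<sigma>" and R: "density dA R" and r': "0 < r'"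
    and D: "psd dA (\<sigma> - complex_of_real r' \<cdot>\<^sub>m R)"
  obtains N p rs where "ensemble dA N p rs"
    "private_info dA dB dE V N p rs = coh_info dB dE V \<sigma> - r' * coh_info dB dE V R"
proof -
  obtain m c u where E: "ensemble dA (Suc m) (case_nat r' c) (case_nat R (\<lambda>i. ket_bra dA (u i)))"
    and avg: "ens_avg dA (Suc m) (case_nat r' c) (case_nat R (\<lambda>i. ket_bra dA (u i))) = \<sigma>"
    using ensemble_split_off[OF \<sigma> R r' D] by blast
  have "private_info dA dB dE V (Suc m) (case_nat r' c) (case_nat R (\<lambda>i. ket_bra dA (u i)))
      = coh_info dB dE V \<sigma> - r' * coh_info dB dE V R"
    unfolding private_info_def avg sum.lessThan_Suc_shift by (simp add: coh_info_ket_bra[OF V])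
  with E show thesis using that by blast
qed

theorem proposition2:
  fixes dA dB dE :: nat and V \<sigma> \<rho> :: "complex mat" and A :: "nat \<Rightarrow> complex mat"
    and r r' \<epsilon> :: real
  assumes V: "isometry dA dB dE V"
    and \<sigma>_state: "density dA \<sigma>"
    and \<sigma>_mixed: "\<sigma> * \<sigma> \<noteq> \<sigma>"
    and \<sigma>_opt: "coh_info dB dE V \<sigma> = Q1 dA dB dE V"
    and \<rho>_pure: "pure_state dA \<rho>"
    and pert: "pert_expansion dA \<rho> A r"
    and \<epsilon>: "\<bar>\<epsilon>\<bar> < r"
    and r': "r' > 0"
    and dom: "psd dA (\<sigma> - complex_of_real r' \<cdot>\<^sub>m pert_mat dA \<rho> A \<epsilon>)"
    and f_neg: "coh_info dB dE V (pert_mat dA \<rho> A \<epsilon>) - coh_info dB dE V \<rho> < 0"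
  shows "P1 dA dB dE V > Q1 dA dB dE V"
proof -
  let ?R = "pert_mat dA \<rho> A \<epsilon>"
  have R: "density dA ?R" using pert \<epsilon> unfolding pert_expansion_def by auto
  have "coh_info dB dE V ?R < 0" using f_neg coh_info_pure_state[OF V \<rho>_pure] by simp
  then have "Q1 dA dB dE V < coh_info dB dE V \<sigma> - r' * coh_info dB dE V ?R"
    using \<sigma>_opt r' by (simp add: mult_pos_neg)
  moreover obtain N p rs where "ensemble dA N p rs"
    and "private_info dA dB dE V N p rs = coh_info dB dE V \<sigma> - r' * coh_info dB dE V ?R"
    using private_info_split_off[OF V \<sigma>_state R r' dom] by blast
  ultimately show ?thesis using private_info_le_P1[OF V] by fastforce
qed

end
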